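(* Let $n\geq 2$ and let $(x_i,y_i)_{i=1}^n$ be labeled examples with $x_i\in\mathbb{R}^d$, $y_i\in\{-1,+1\}$, $\max_i\|x_i\|\leq 1$. Let $Q\in\mathbb{R}^{n\times n}$ with $Q_{ij} = y_iy_j\langle x_i,x_j\rangle$, let $\sigma^2 \geq \frac{1}{n}\|Q\|$ (spectral norm), $\lambda>0$, $b\in\{1,\dots,n\}$ and $\beta_b := 1+\frac{(b-1)(n\sigma^2-1)}{n-1}$. For $\alpha,\delta\in\mathbb{R}^n$ define $$D(\alpha) := -\frac{1}{2\lambda n^2}\alpha^\top Q\alpha + \frac{1}{n}\sum_{i=1}^n\alpha_i,$$ $$H(\delta,\alpha) := -\frac{\alpha^\top Q\alpha + 2\alpha^\top Q\delta + \beta_b\|\delta\|^2}{2\lambda n^2} + \sum_{i=1}^n\frac{\alpha_i+\delta_i}{n}.$$ Then for any $\alpha,\delta\in\mathbb{R}^n$, if $A$ is drawn uniformly at random among subsets of $\{1,\dots,n\}$ of cardinality $b$, $$\mathbb{E}_A\big[D(\alpha+\delta_{[A]})\big] \geq \Big(1-\frac{b}{n}\Big)D(\alpha) + \frac{b}{n}H(\delta,\alpha),$$ where $\delta_{[A]}\in\mathbb{R}^n$ agrees with $\delta$ on coordinates in $A$ and is zero elsewhere.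
   Context: $D$ is the (unconstrained expression of the) SVM dual objective; $\|Q\|$ is the spectral norm of $Q$. *)

theory Defs
  imports "HOL-Analysis.Analysis" "HOL-Probability.Probability_Mass_Function"
begin

text \<open>Examples are indexed by a finite type 'n (so n = CARD('n)); features live in
  real^'d.  Q_ij = y_i y_j <x_i, x_j>.\<close>

definition Qmat :: "('n::finite \<Rightarrow> real^'d::finite) \<Rightarrow> ('n \<Rightarrow> real) \<Rightarrow> real^'n^'n" where
  "Qmat x y = (\<chi> i j. y i * y j * (x i \<bullet> x j))"

definition spec_norm :: "real^'n::finite^'m::finite \<Rightarrow> real" where
  "spec_norm M = onorm (\<lambda>v. M *v v)"

definition betab :: "nat \<Rightarrow> nat \<Rightarrow> real \<Rightarrow> real" where
  "betab n b \<sigma>2 = 1 + (real b - 1) * (real n * \<sigma>2 - 1) / (real n - 1)"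

definition Dobj :: "real^'n^'n \<Rightarrow> real \<Rightarrow> real^'n::finite \<Rightarrow> real" where
  "Dobj Q lam \<alpha> = - (1 / (2 * lam * real CARD('n)^2)) * (\<alpha> \<bullet> (Q *v \<alpha>))
      + (1 / real CARD('n)) * (\<Sum>i\<in>UNIV. \<alpha> $ i)"

definition Hobj :: "real^'n^'n \<Rightarrow> real \<Rightarrow> real \<Rightarrow> real^'n::finite \<Rightarrow> real^'n \<Rightarrow> real" where
  "Hobj Q lam \<beta> \<delta> \<alpha> =
     - ((\<alpha> \<bullet> (Q *v \<alpha>)) + 2 * (\<alpha> \<bullet> (Q *v \<delta>)) + \<beta> * (norm \<delta>)^2) / (2 * lam * real CARD('n)^2)
     + (\<Sum>i\<in>UNIV. (\<alpha> $ i + \<delta> $ i) / real CARD('n))"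

definition restr :: "real^'n::finite \<Rightarrow> 'n set \<Rightarrow> real^'n" where
  "restr \<delta> A = (\<chi> i. if i \<in> A then \<delta> $ i else 0)"

definition unif_subset_exp :: "nat \<Rightarrow> ('n::finite set \<Rightarrow> real) \<Rightarrow> real" where
  "unif_subset_exp b f = measure_pmf.expectation (pmf_of_set {A. card A = b}) f"

end

theory Submission
  imports Defs
begin

text \<open>
  A uniformly random \<open>b\<close>-subset \<open>A\<close> contains a given index with probability \<open>p\<^sub>1 = b/n\<close>
  and a given pair of distinct indices with probability \<open>p\<^sub>2 = b(b-1)/(n(n-1))\<close>. Hence the
  expectation of the quadratic form at \<open>\<alpha> + \<delta>\<^sub>A\<close> can be computed exactly; its part
  quadratic in \<open>\<delta>\<close> is \<open>p\<^sub>2 \<delta>\<^sup>TQ\<delta> + (p\<^sub>1 - p\<^sub>2) \<Sum>\<^sub>i Q\<^sub>i\<^sub>i \<delta>\<^sub>i\<^sup>2\<close>. Bounding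
  \<open>\<delta>\<^sup>TQ\<delta> \<le> \<parallel>Q\<parallel> \<parallel>\<delta>\<parallel>\<^sup>2 \<le> n\<sigma>\<^sup>2 \<parallel>\<delta>\<parallel>\<^sup>2\<close> and \<open>Q\<^sub>i\<^sub>i = \<parallel>x\<^sub>i\<parallel>\<^sup>2 \<le> 1\<close> gives at most
  \<open>p\<^sub>1 \<beta>\<^sub>b \<parallel>\<delta>\<parallel>\<^sup>2\<close>, since \<open>p\<^sub>1 \<beta>\<^sub>b = (p\<^sub>1 - p\<^sub>2) + p\<^sub>2 n\<sigma>\<^sup>2\<close>; this is exactly the quadratic
  term of \<open>H\<close>, while the linear terms of both sides agree.
\<close>

lemma card_supersets_card_eq:
  fixes F :: "'n::finite set"
  assumes "card F \<le> b"
  shows "card {A::'n set. card A = b \<and> F \<subseteq> A} = (CARD('n) - card F) choose (b - card F)"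
proof -
  have "bij_betw (\<lambda>A. A - F) {A. card A = b \<and> F \<subseteq> A} {B. B \<subseteq> UNIV - F \<and> card B = b - card F}"
  proof (rule bij_betw_byWitness[where f'="\<lambda>B. B \<union> F"])
    show "(\<lambda>B. B \<union> F) ` {B. B \<subseteq> UNIV - F \<and> card B = b - card F} \<subseteq> {A. card A = b \<and> F \<subseteq> A}"
    proof clarify
      fix B assume "B \<subseteq> UNIV - F" "card B = b - card F"
      then have "card (B \<union> F) = card B + card F" by (subst card_Un_disjoint) auto
      then show "card (B \<union> F) = b \<and> F \<subseteq> B \<union> F" using assms \<open>card B = b - card F\<close> by auto
    qed
  qed (auto simp: card_Diff_subset)
  then have "card {A::'n set. card A = b \<and> F \<subseteq> A} = card {B. B \<subseteq> UNIV - F \<and> card B = b - card F}"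
    by (rule bij_betw_same_card)
  also have "\<dots> = (CARD('n) - card F) choose (b - card F)"
    by (subst n_subsets) (simp_all add: card_Diff_subset)
  finally show ?thesis .
qed

lemma card_subsets_card_eq: "card {A::'n::finite set. card A = b} = CARD('n) choose b"
  using card_supersets_card_eq[of "{}" b] by simp

lemma binomial_times_pred_eq:
  assumes "2 \<le> k"
  shows "k * (k - 1) * (n choose k) = n * (n - 1) * ((n - 2) choose (k - 2))"
proof -
  have "k * (k - 1) * (n choose k) = n * ((k - 1) * ((n - 1) choose (k - 1)))"
    using times_binomial_minus1_eq[of k n] assms by (simp add: mult_ac)
  also have "(k - 1) * ((n - 1) choose (k - 1)) = (n - 1) * ((n - 2) choose (k - 2))"
    using times_binomial_minus1_eq[of "k - 1" "n - 1"] assms by (simp add: numeral_2_eq_2)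
  finally show ?thesis by (simp add: mult_ac)
qed

lemma unif_subset_exp_eq_average:
  fixes f :: "'n::finite set \<Rightarrow> real"
  assumes "b \<le> CARD('n)"
  shows "unif_subset_exp b f = sum f {A. card A = b} / real (CARD('n) choose b)"
proof -
  have "{A::'n set. card A = b} \<noteq> {}"
    using card_subsets_card_eq[where 'n='n, of b] assms by force
  from integral_pmf_of_set[OF this finite] show ?thesis
    unfolding unif_subset_exp_def card_subsets_card_eq .
qed

lemma unif_subset_exp_add:
  fixes f g :: "'n::finite set \<Rightarrow> real"
  assumes "b \<le> CARD('n)"
  shows "unif_subset_exp b (\<lambda>A. f A + g A) = unif_subset_exp b f + unif_subset_exp b g"
  using assms by (simp add: unif_subset_exp_eq_average sum.distrib add_divide_distrib)

lemma unif_subset_exp_mult_left: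
  fixes f :: "'n::finite set \<Rightarrow> real"
  assumes "b \<le> CARD('n)"
  shows "unif_subset_exp b (\<lambda>A. c * f A) = c * unif_subset_exp b f"
  using assms by (simp add: unif_subset_exp_eq_average sum_distrib_left)

lemma unif_subset_exp_const:
  assumes "b \<le> CARD('n::finite)"
  shows "unif_subset_exp b (\<lambda>A::'n set. c) = c"
  using assms by (simp add: unif_subset_exp_eq_average card_subsets_card_eq)

lemma unif_subset_exp_sum:
  fixes f :: "'i \<Rightarrow> 'n::finite set \<Rightarrow> real"
  assumes "b \<le> CARD('n)"
  shows "unif_subset_exp b (\<lambda>A. \<Sum>i\<in>I. f i A) = (\<Sum>i\<in>I. unif_subset_exp b (f i))"
  using assms by (simp add: unif_subset_exp_eq_average sum_divide_distrib sum.swap[of _ I])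

lemma unif_subset_exp_mem:
  assumes "b \<le> CARD('n::finite)"
  shows "unif_subset_exp b (\<lambda>A. of_bool ((i::'n) \<in> A)) = real b / real CARD('n)"
proof (cases "b = 0")
  case True
  then show ?thesis using assms by (simp add: unif_subset_exp_eq_average)
next
  case False
  have "{A::'n set. card A = b} \<inter> {A. i \<in> A} = {A. card A = b \<and> {i} \<subseteq> A}" by auto
  then have "card ({A::'n set. card A = b} \<inter> {A. i \<in> A}) = (CARD('n) - 1) choose (b - 1)"
    using card_supersets_card_eq[of "{i}" b] False by simp
  moreover have "real b * (CARD('n) choose b) = real CARD('n) * ((CARD('n) - 1) choose (b - 1))"
    using times_binomial_minus1_eq[of b "CARD('n)"] False by (metis bot_nat_0.not_eq_extremum of_nat_mult)
  moreover have "CARD('n) choose b > 0" using assms by simp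
  ultimately show ?thesis using assms
    by (simp add: unif_subset_exp_eq_average field_simps)
qed

definition pair_prob :: "nat \<Rightarrow> nat \<Rightarrow> real" where
  "pair_prob n b = real b * (real b - 1) / (real n * (real n - 1))"

lemma unif_subset_exp_mem_pair:
  assumes "b \<le> CARD('n::finite)" and "(i::'n) \<noteq> j"
  shows "unif_subset_exp b (\<lambda>A. of_bool (i \<in> A \<and> j \<in> A)) = pair_prob CARD('n) b"
proof (cases "b < 2")
  case True
  have "{A::'n set. card A = b} \<inter> {A. i \<in> A \<and> j \<in> A} = {}"
  proof safe
    fix A :: "'n set" assume "i \<in> A" "j \<in> A" "b = card A"
    then have "card {i, j} \<le> card A" by (intro card_mono) auto
    then show "A \<in> {}" using True \<open>b = card A\<close> assms(2) by simp
  qed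
  moreover have "pair_prob CARD('n) b = 0" using True by (auto simp: pair_prob_def less_2_cases_iff)
  ultimately show ?thesis using assms(1) by (simp add: unif_subset_exp_eq_average)
next
  case False
  have "{A::'n set. card A = b} \<inter> {A. i \<in> A \<and> j \<in> A} = {A. card A = b \<and> {i, j} \<subseteq> A}" by auto
  then have "card ({A::'n set. card A = b} \<inter> {A. i \<in> A \<and> j \<in> A}) = (CARD('n) - 2) choose (b - 2)"
    using card_supersets_card_eq[of "{i, j}" b] False assms(2) by (simp add: numeral_2_eq_2)
  moreover have "real b * (real b - 1) * (CARD('n) choose b)
      = real CARD('n) * (real CARD('n) - 1) * ((CARD('n) - 2) choose (b - 2))"
    using binomial_times_pred_eq[of b "CARD('n)", THEN arg_cong[where f = real]] False assms(1)
    by (simp add: of_nat_diff)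
  moreover have "CARD('n) choose b > 0" "real CARD('n) - 1 > 0"
    using assms card_mono[of UNIV "{i, j}"] by auto
  ultimately show ?thesis using assms(1)
    by (simp add: unif_subset_exp_eq_average pair_prob_def field_simps)
qed

lemma pair_prob_eq: "pair_prob n b = real b / real n * ((real b - 1) / (real n - 1))"
  by (simp add: pair_prob_def)

lemma pair_prob_nonneg: "pair_prob n b \<ge> 0"
  by (cases b; cases n) (simp_all add: pair_prob_def)

lemma pair_prob_le:
  assumes "b \<le> n"
  shows "pair_prob n b \<le> real b / real n"
proof (cases "n \<le> 1")
  case True
  then show ?thesis using assms by (auto simp: pair_prob_def le_Suc_eq)
next
  case False
  then have "(real b - 1) / (real n - 1) \<le> 1" using assms by simp
  then show ?thesis unfolding pair_prob_eq by (rule mult_left_le) simp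
qed

lemma betab_eq_pair_prob:
  "real b / real n * betab n b s = (real b / real n - pair_prob n b) + pair_prob n b * (real n * s)"
proof -
  define r where "r = (real b - 1) / (real n - 1)"
  have beta: "betab n b s = 1 + r * (real n * s - 1)" by (simp add: betab_def r_def)
  show ?thesis unfolding beta pair_prob_eq r_def[symmetric] by (simp add: algebra_simps)
qed

lemma inner_mult_vec_eq_sum:
  fixes M :: "real^'n::finite^'m::finite"
  shows "u \<bullet> (M *v v) = (\<Sum>i\<in>UNIV. \<Sum>j\<in>UNIV. u$i * M$i$j * v$j)"
  by (simp add: inner_vec_def matrix_vector_mult_def sum_distrib_left mult.assoc)

lemma inner_mult_vec_commute:
  fixes M :: "real^'n::finite^'n"
  assumes "\<And>i j. M$i$j = M$j$i"
  shows "u \<bullet> (M *v v) = v \<bullet> (M *v u)"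
  unfolding inner_mult_vec_eq_sum by (subst sum.swap) (simp add: assms mult_ac)

lemma inner_mult_vec_le_spec_norm:
  fixes M :: "real^'n::finite^'n"
  shows "v \<bullet> (M *v v) \<le> spec_norm M * (norm v)^2"
proof -
  have "v \<bullet> (M *v v) \<le> norm v * norm (M *v v)" by (rule norm_cauchy_schwarz)
  also have "\<dots> \<le> norm v * (spec_norm M * norm v)"
    unfolding spec_norm_def by (intro mult_left_mono onorm) auto
  finally show ?thesis by (simp add: power2_eq_square mult_ac)
qed

lemma sum_diag_le_norm_square:
  fixes M :: "real^'n::finite^'n"
  assumes "\<And>i. M$i$i \<le> 1"
  shows "(\<Sum>i\<in>UNIV. M$i$i * (v$i)^2) \<le> (norm v)^2"
proof -
  have "(\<Sum>i\<in>UNIV. M$i$i * (v$i)^2) \<le> (\<Sum>i\<in>UNIV. (v$i)^2)"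
    using mult_right_mono[OF assms zero_le_power2] by (intro sum_mono) simp
  also have "\<dots> = (norm v)^2"
    by (simp add: norm_vec_def L2_set_def sum_nonneg)
  finally show ?thesis .
qed

lemma Qmat_symmetric: "Qmat x y $ i $ j = Qmat x y $ j $ i"
  by (simp add: Qmat_def inner_commute)

lemma Qmat_diag_le_one:
  assumes "y i \<in> {-1, 1}" and "norm (x i) \<le> 1"
  shows "Qmat x y $ i $ i \<le> 1"
proof -
  have "x i \<bullet> x i \<le> 1"
    using assms(2) by (simp add: power2_norm_eq_inner[symmetric] power_le_one)
  moreover have "y i * y i = 1" using assms(1) by auto
  ultimately show ?thesis by (simp add: Qmat_def)
qed

lemma unif_subset_exp_restr_quadratic:
  fixes Q :: "real^'n^'n" and \<alpha> \<delta> :: "real^'n::finite"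
  assumes "b \<le> CARD('n)"
  shows "unif_subset_exp b (\<lambda>A. (\<alpha> + restr \<delta> A) \<bullet> (Q *v (\<alpha> + restr \<delta> A)))
    = \<alpha> \<bullet> (Q *v \<alpha>) + real b / real CARD('n) * (\<alpha> \<bullet> (Q *v \<delta>) + \<delta> \<bullet> (Q *v \<alpha>))
      + pair_prob CARD('n) b * (\<delta> \<bullet> (Q *v \<delta>))
      + (real b / real CARD('n) - pair_prob CARD('n) b) * (\<Sum>i\<in>UNIV. Q$i$i * (\<delta>$i)^2)"
proof -
  define p1 where "p1 = real b / real CARD('n)"
  define p2 where "p2 = pair_prob CARD('n) b"
  have E1: "unif_subset_exp b (\<lambda>A. of_bool (i \<in> A)) = p1" for i :: 'n
    using unif_subset_exp_mem[OF assms] by (simp add: p1_def)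
  have E2: "unif_subset_exp b (\<lambda>A. of_bool (i \<in> A \<and> j \<in> A)) = (if i = j then p1 else p2)" for i j :: 'n
    using E1 unif_subset_exp_mem_pair[OF assms] by (simp add: p2_def)
  have entry: "unif_subset_exp b (\<lambda>A. (\<alpha> + restr \<delta> A)$i * Q$i$j * (\<alpha> + restr \<delta> A)$j)
      = \<alpha>$i * Q$i$j * \<alpha>$j + p1 * (\<alpha>$i * Q$i$j * \<delta>$j + \<delta>$i * Q$i$j * \<alpha>$j)
        + (if i = j then p1 else p2) * (\<delta>$i * Q$i$j * \<delta>$j)" for i j
  proof -
    have "(\<alpha> + restr \<delta> A)$i * Q$i$j * (\<alpha> + restr \<delta> A)$j
      = \<alpha>$i * Q$i$j * \<alpha>$j + (\<alpha>$i * Q$i$j * \<delta>$j * of_bool (j \<in> A)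
        + (\<delta>$i * Q$i$j * \<alpha>$j * of_bool (i \<in> A) + \<delta>$i * Q$i$j * \<delta>$j * of_bool (i \<in> A \<and> j \<in> A)))" for A
      by (simp add: restr_def algebra_simps)
    then show ?thesis
      by (simp only: unif_subset_exp_add[OF assms] unif_subset_exp_mult_left[OF assms]
          unif_subset_exp_const[OF assms] E1 E2) (simp add: algebra_simps)
  qed
  have diag: "(\<Sum>i\<in>UNIV. \<Sum>j\<in>UNIV. (if i = j then p1 else p2) * (\<delta>$i * Q$i$j * \<delta>$j))
      = p2 * (\<delta> \<bullet> (Q *v \<delta>)) + (p1 - p2) * (\<Sum>i\<in>UNIV. Q$i$i * (\<delta>$i)^2)"
  proof -
    have "(\<Sum>i\<in>UNIV. \<Sum>j\<in>UNIV. (if i = j then p1 else p2) * (\<delta>$i * Q$i$j * \<delta>$j))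
      = (\<Sum>i\<in>UNIV. \<Sum>j\<in>UNIV. p2 * (\<delta>$i * Q$i$j * \<delta>$j)
          + (if i = j then (p1 - p2) * (\<delta>$i * Q$i$j * \<delta>$j) else 0))"
      by (intro sum.cong refl) (simp add: algebra_simps)
    then show ?thesis
      by (simp add: inner_mult_vec_eq_sum sum.distrib sum_distrib_left sum.delta' power2_eq_square mult_ac)
  qed
  have "unif_subset_exp b (\<lambda>A. (\<alpha> + restr \<delta> A) \<bullet> (Q *v (\<alpha> + restr \<delta> A)))
      = (\<Sum>i\<in>UNIV. \<Sum>j\<in>UNIV. \<alpha>$i * Q$i$j * \<alpha>$j + p1 * (\<alpha>$i * Q$i$j * \<delta>$j + \<delta>$i * Q$i$j * \<alpha>$j)
        + (if i = j then p1 else p2) * (\<delta>$i * Q$i$j * \<delta>$j))"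
    by (simp only: inner_mult_vec_eq_sum unif_subset_exp_sum[OF assms] entry)
  also have "\<dots> = \<alpha> \<bullet> (Q *v \<alpha>) + p1 * (\<alpha> \<bullet> (Q *v \<delta>) + \<delta> \<bullet> (Q *v \<alpha>))
      + (\<Sum>i\<in>UNIV. \<Sum>j\<in>UNIV. (if i = j then p1 else p2) * (\<delta>$i * Q$i$j * \<delta>$j))"
    by (simp only: inner_mult_vec_eq_sum sum.distrib sum_distrib_left distrib_left)
  also have "\<dots> = \<alpha> \<bullet> (Q *v \<alpha>) + p1 * (\<alpha> \<bullet> (Q *v \<delta>) + \<delta> \<bullet> (Q *v \<alpha>))
      + p2 * (\<delta> \<bullet> (Q *v \<delta>)) + (p1 - p2) * (\<Sum>i\<in>UNIV. Q$i$i * (\<delta>$i)^2)"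
    by (simp only: diag add.assoc)
  finally show ?thesis by (simp only: p1_def p2_def)
qed

lemma unif_subset_exp_restr_sum:
  fixes \<alpha> \<delta> :: "real^'n::finite"
  assumes "b \<le> CARD('n)"
  shows "unif_subset_exp b (\<lambda>A. \<Sum>i\<in>UNIV. (\<alpha> + restr \<delta> A)$i)
    = (\<Sum>i\<in>UNIV. \<alpha>$i) + real b / real CARD('n) * (\<Sum>i\<in>UNIV. \<delta>$i)"
proof -
  have "(\<alpha> + restr \<delta> A)$i = \<alpha>$i + \<delta>$i * of_bool (i \<in> A)" for A i
    by (simp add: restr_def)
  then show ?thesis
    by (simp only: unif_subset_exp_sum[OF assms] unif_subset_exp_add[OF assms]
        unif_subset_exp_mult_left[OF assms] unif_subset_exp_const[OF assms] unif_subset_exp_mem[OF assms])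
      (simp add: sum.distrib sum_distrib_left sum_divide_distrib mult.commute)
qed

lemma restr_quadratic_excess_le:
  fixes Q :: "real^'n::finite^'n" and \<delta> :: "real^'n"
  assumes "\<And>i. Q$i$i \<le> 1" and "spec_norm Q \<le> real CARD('n) * s"
    and "b \<le> CARD('n)"
  shows "pair_prob CARD('n) b * (\<delta> \<bullet> (Q *v \<delta>))
      + (real b / real CARD('n) - pair_prob CARD('n) b) * (\<Sum>i\<in>UNIV. Q$i$i * (\<delta>$i)^2)
    \<le> real b / real CARD('n) * betab CARD('n) b s * (norm \<delta>)^2"
proof -
  have "\<delta> \<bullet> (Q *v \<delta>) \<le> real CARD('n) * s * (norm \<delta>)^2"
    using inner_mult_vec_le_spec_norm[of \<delta> Q] assms(2) by (smt (verit) mult_right_mono zero_le_power2)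
  then have "pair_prob CARD('n) b * (\<delta> \<bullet> (Q *v \<delta>))
      \<le> pair_prob CARD('n) b * (real CARD('n) * s) * (norm \<delta>)^2"
    using pair_prob_nonneg by (simp add: mult_left_mono mult.assoc)
  moreover have "(real b / real CARD('n) - pair_prob CARD('n) b) * (\<Sum>i\<in>UNIV. Q$i$i * (\<delta>$i)^2)
      \<le> (real b / real CARD('n) - pair_prob CARD('n) b) * (norm \<delta>)^2"
    using pair_prob_le[OF assms(3)] sum_diag_le_norm_square[OF assms(1)] by (simp add: mult_left_mono)
  ultimately show ?thesis
    unfolding betab_eq_pair_prob by (simp add: algebra_simps)
qed

theorem lemma3:
  fixes x :: "'n::finite \<Rightarrow> real^'d::finite" and y :: "'n \<Rightarrow> real"
    and \<sigma>2 lam :: real and b :: nat and \<alpha> \<delta> :: "real^'n"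
  assumes "CARD('n) \<ge> 2"
    and "\<forall>i. y i \<in> {-1, 1}"
    and "\<forall>i. norm (x i) \<le> 1"
    and "\<sigma>2 \<ge> spec_norm (Qmat x y) / real CARD('n)"
    and "lam > 0"
    and "1 \<le> b" and "b \<le> CARD('n)"
  shows "unif_subset_exp b (\<lambda>A. Dobj (Qmat x y) lam (\<alpha> + restr \<delta> A))
    \<ge> (1 - real b / real CARD('n)) * Dobj (Qmat x y) lam \<alpha>
      + (real b / real CARD('n)) * Hobj (Qmat x y) lam (betab CARD('n) b \<sigma>2) \<delta> \<alpha>"
proof -
  define Q where "Q = Qmat x y"
  define c where "c = 1 / (2 * lam * real CARD('n)^2)"
  define p1 where "p1 = real b / real CARD('n)"
  define \<beta> where "\<beta> = betab CARD('n) b \<sigma>2"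
  define excess where "excess = pair_prob CARD('n) b * (\<delta> \<bullet> (Q *v \<delta>))
    + (p1 - pair_prob CARD('n) b) * (\<Sum>i\<in>UNIV. Q$i$i * (\<delta>$i)^2)"
  have spec: "spec_norm Q \<le> real CARD('n) * \<sigma>2"
    using assms(1,4) by (simp add: Q_def field_simps)
  have diag: "Q$i$i \<le> 1" for i
    unfolding Q_def by (rule Qmat_diag_le_one) (use assms(2,3) in auto)
  have "excess \<le> p1 * \<beta> * (norm \<delta>)^2"
    unfolding excess_def p1_def \<beta>_def by (rule restr_quadratic_excess_le[OF diag spec assms(7)])
  then have bound: "c * excess \<le> c * (p1 * \<beta> * (norm \<delta>)^2)"
    using assms(5) by (intro mult_left_mono) (simp_all add: c_def)
  have sym: "\<delta> \<bullet> (Q *v \<alpha>) = \<alpha> \<bullet> (Q *v \<delta>)"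
    using inner_mult_vec_commute Qmat_symmetric unfolding Q_def by metis
  have lhs: "unif_subset_exp b (\<lambda>A. Dobj Q lam (\<alpha> + restr \<delta> A))
      = Dobj Q lam \<alpha> - c * (2 * p1 * (\<alpha> \<bullet> (Q *v \<delta>))) - c * excess
        + p1 / real CARD('n) * (\<Sum>i\<in>UNIV. \<delta>$i)"
    unfolding Dobj_def
    by (simp only: unif_subset_exp_add[OF assms(7)] unif_subset_exp_mult_left[OF assms(7)]
        unif_subset_exp_restr_quadratic[OF assms(7)] unif_subset_exp_restr_sum[OF assms(7)])
      (simp add: sym c_def p1_def excess_def algebra_simps)
  have rhs: "(1 - p1) * Dobj Q lam \<alpha> + p1 * Hobj Q lam \<beta> \<delta> \<alpha>
      = Dobj Q lam \<alpha> - c * (2 * p1 * (\<alpha> \<bullet> (Q *v \<delta>))) - c * (p1 * \<beta> * (norm \<delta>)^2)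
        + p1 / real CARD('n) * (\<Sum>i\<in>UNIV. \<delta>$i)"
    using assms(5)
    by (simp add: Dobj_def Hobj_def c_def sum.distrib sum_divide_distrib[symmetric] field_simps)
  show ?thesis
    using bound unfolding Q_def[symmetric] \<beta>_def[symmetric] p1_def[symmetric] lhs rhs by linarith
qed

end
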